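(* Let $\rho:\mathbb{Z}\to[0,\infty)$ be a weight with finite moments, $f,g$ polynomials with $\deg f\le2$, $\deg g\le1$, $f(x+1)\rho(x+1)-f(x)\rho(x)=g(x)\rho(x)$ on $\mathbb{Z}$, and $\rho f$ vanishing at the end points of the support of $\rho$. Let $\{p_n\}$ be the monic orthogonal polynomials for $\rho$ with $\sum_xp_mp_n\rho=h_n\delta_{nm}$, $h_n>0$; let $\mathcal{A}_{\rm l}=g(x)T+f(x)(\Delta+\nabla)$, $c_n:=-\sum_xp_{n+1}(x)(\mathcal{A}_{\rm l}p_n)(x)\rho(x)$, $\omega(x)=f(x+1)\rho(x+1)$, and assume the Pfaffians $\mathrm{Pf}[\sum_x(x^i(x+1)^j-(x+1)^ix^j)\omega(x)]_{i,j=0}^{2n-1}$ are nonzero for all $n\ge1$. Let $Q_{2n+1}=p_{2n+1}$, $Q_{2n}=\sum_{l=0}^n\big(\prod_{j=l}^{n-1}c_{2j+1}/c_{2j}\big)p_{2l}$ and $u_n=c_{2n}$, and set $t_{2m,2m-2}:=-c_{2m-1}/c_{2m-2}$. Then for all $m\ge0$ (with $Q_{-2}=0$ in (3)): (1) $p_{2m+1}(x)=Q_{2m+1}(x)$; (2) $\frac{1}{u_m}\mathcal{A}_{\rm l}Q_{2m+1}(y)=\frac{p_{2m}(y)}{h_{2m}}+t_{2m+2,2m}\frac{p_{2m+2}(y)}{h_{2m+2}}$; (3) $p_{2m}(x)=Q_{2m}(x)+t_{2m,2m-2}Q_{2m-2}(x)$; (4) $\frac{1}{u_m}\mathcal{A}_{\rm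 l}Q_{2m}(y)=-\frac{p_{2m+1}(y)}{h_{2m+1}}$.
   Context: $T\phi(x)=\phi(x+1)$, $\Delta\phi(x)=\phi(x+1)-\phi(x)$, $\nabla\phi(x)=\phi(x)-\phi(x-1)$. The $Q_k$ are skew orthogonal for $\langle\phi,\psi\rangle_{s,\omega}=\sum_{x\in\mathbb{Z}}[\phi(x)\psi(x+1)-\phi(x+1)\psi(x)]\omega(x)$ with $\langle Q_{2n},Q_{2m+1}\rangle_{s,\omega}=u_n\delta_{nm}$. *)

theory Defs
  imports "HOL-Analysis.Analysis" "HOL-Computational_Algebra.Polynomial"
begin

definition Al :: "real poly \<Rightarrow> real poly \<Rightarrow> (real \<Rightarrow> real) \<Rightarrow> real \<Rightarrow> real" where
  "Al f g \<phi> x = poly g x * \<phi> (x + 1) + poly f x * ((\<phi> (x + 1) - \<phi> x) + (\<phi> x - \<phi> (x - 1)))"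

definition pfaffian :: "nat \<Rightarrow> (nat \<Rightarrow> nat \<Rightarrow> real) \<Rightarrow> real" where
  "pfaffian n A = (\<Sum>\<sigma> | \<sigma> permutes {..<2*n}.
      of_int (sign \<sigma>) * (\<Prod>i<n. A (\<sigma> (2*i)) (\<sigma> (2*i+1)))) / (2 ^ n * fact n)"

end

theory Submission
  imports Defs
begin

text \<open>
  Summation by parts against Pearson's equation identifies \<open>\<langle>\<phi>, \<A>\<^sub>l \<psi>\<rangle>\<^sub>\<rho>\<close> with the
  skew form \<open>\<langle>\<phi>, \<psi>\<rangle>\<^sub>s\<^sub>,\<^sub>\<omega>\<close>, which is therefore antisymmetric. Since \<open>\<A>\<^sub>l\<close> raises
  degrees by at most one, orthogonality leaves just two terms in the expansion
  \<open>\<A>\<^sub>l p\<^sub>n = -c\<^sub>n/h\<^sub>n\<^sub>+\<^sub>1 p\<^sub>n\<^sub>+\<^sub>1 + c\<^sub>n\<^sub>-\<^sub>1/h\<^sub>n\<^sub>-\<^sub>1 p\<^sub>n\<^sub>-\<^sub>1\<close>.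
  If \<open>c\<^sub>2\<^sub>m\<close> vanished, \<open>p\<^sub>2\<^sub>m\<^sub>+\<^sub>1\<close> would be skew-orthogonal to all polynomials of degree
  at most \<open>2m + 1\<close> and the moment Pfaffian of order \<open>m + 1\<close> would vanish. So \<open>c\<^sub>2\<^sub>m \<noteq> 0\<close>,
  and the four identities follow from the three-term relation: the coefficients of \<open>Q\<^sub>2\<^sub>m\<close>
  are exactly those for which the odd terms of \<open>\<A>\<^sub>l Q\<^sub>2\<^sub>m\<close> telescope.
\<close>

definition shift_poly :: "'a::comm_ring_1 \<Rightarrow> 'a poly \<Rightarrow> 'a poly" where
  "shift_poly a q = q \<circ>\<^sub>p [:a, 1:]"

lemma poly_shift_poly [simp]: "poly (shift_poly a q) x = poly q (a + x)"
  by (simp add: shift_poly_def poly_pcompose)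

lemma shift_poly_add: "shift_poly a (q + r) = shift_poly a q + shift_poly a r"
  by (simp add: shift_poly_def pcompose_add)

lemma shift_poly_smult: "shift_poly a (smult c q) = smult c (shift_poly a q)"
  by (simp add: shift_poly_def pcompose_smult)

lemma degree_shift_poly [simp]: "degree (shift_poly a (q :: 'a::idom poly)) = degree q"
  by (simp add: shift_poly_def degree_pcompose)

lemma lead_coeff_shift_poly [simp]: "lead_coeff (shift_poly a (q :: 'a::idom poly)) = lead_coeff q"
proof (cases "degree q = 0")
  case True
  then show ?thesis by (metis degree_0_id pcompose_const shift_poly_def)
next
  case False
  then show ?thesis by (simp add: shift_poly_def lead_coeff_comp)
qed

lemma degree_central_difference_less:
  fixes q :: "'a::idom poly"
  assumes "shift_poly 1 q - shift_poly (-1) q \<noteq> 0"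
  shows "degree (shift_poly 1 q - shift_poly (-1) q) < degree q"
proof -
  let ?d = "shift_poly 1 q - shift_poly (-1) q"
  have "degree ?d \<le> degree q"
    using degree_diff_le[of "shift_poly 1 q" "degree q" "shift_poly (-1) q"] by simp
  moreover have "coeff ?d (degree q) = 0"
    using lead_coeff_shift_poly[of 1 q] lead_coeff_shift_poly[of "-1" q] by simp
  ultimately show ?thesis using assms by (metis le_neq_implies_less leading_coeff_0_iff)
qed

definition Al_poly :: "real poly \<Rightarrow> real poly \<Rightarrow> real poly \<Rightarrow> real poly" where
  "Al_poly f g q = g * shift_poly 1 q + f * (shift_poly 1 q - shift_poly (-1) q)"

lemma Al_poly_eval: "Al f g (poly q) x = poly (Al_poly f g q) x"
proof -
  have "x - 1 = -1 + x" by simp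
  then show ?thesis by (simp add: Al_def Al_poly_def algebra_simps)
qed

lemma Al_poly_add: "Al_poly f g (q + r) = Al_poly f g q + Al_poly f g r"
  by (simp add: Al_poly_def shift_poly_add algebra_simps)

lemma Al_poly_smult: "Al_poly f g (smult c q) = smult c (Al_poly f g q)"
  by (simp add: Al_poly_def shift_poly_smult algebra_simps smult_add_right smult_diff_right)

lemma Al_poly_0 [simp]: "Al_poly f g 0 = 0"
  by (simp add: Al_poly_def shift_poly_def)

lemma degree_Al_poly:
  assumes "degree f \<le> 2" "degree g \<le> 1"
  shows "degree (Al_poly f g q) \<le> degree q + 1"
proof -
  let ?d = "shift_poly 1 q - shift_poly (-1) q"
  have "degree (g * shift_poly 1 q) \<le> degree q + 1"
    using degree_mult_le[of g "shift_poly 1 q"] assms by simp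
  moreover have "degree (f * ?d) \<le> degree q + 1"
  proof (cases "?d = 0")
    case False
    then show ?thesis
      using degree_central_difference_less[of q] degree_mult_le[of f ?d] assms by linarith
  qed simp
  ultimately show ?thesis unfolding Al_poly_def by (rule degree_add_le)
qed

definition linear_form :: "(real poly \<Rightarrow> real) \<Rightarrow> bool" where
  "linear_form l \<longleftrightarrow> (\<forall>x y. l (x + y) = l x + l y) \<and> (\<forall>c x. l (smult c x) = c * l x)"

lemma linear_form_sum:
  assumes "linear_form l"
  shows "l (\<Sum>k\<in>K. smult (\<gamma> k) (\<psi> k)) = (\<Sum>k\<in>K. \<gamma> k * l (\<psi> k))"
proof -
  have "l 0 = 0" using assms unfolding linear_form_def by (metis mult_zero_left smult_0_left)
  then show ?thesis
    using assms unfolding linear_form_def by (induction K rule: infinite_finite_induct) simp_all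
qed

lemma linear_form_cmult: "linear_form l \<Longrightarrow> linear_form (\<lambda>x. K * l x)"
  unfolding linear_form_def by (simp add: algebra_simps)

lemma linear_form_sum_forms:
  "(\<And>s. s \<in> S \<Longrightarrow> linear_form (F s)) \<Longrightarrow> linear_form (\<lambda>x. \<Sum>s\<in>S. F s x)"
  unfolding linear_form_def by (simp add: sum.distrib sum_distrib_left)

lemma pfaffian_swap:
  assumes "a < 2*n" "b < 2*n" "a \<noteq> b"
  shows "pfaffian n (\<lambda>i j. A (Transposition.transpose a b i) (Transposition.transpose a b j)) = - pfaffian n A"
proof -
  let ?t = "Transposition.transpose a b"
  let ?term = "\<lambda>A \<sigma>. of_int (sign \<sigma>) * (\<Prod>i<n. A (\<sigma> (2*i)) (\<sigma> (2*i+1))) :: real"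
  have t: "?t permutes {..<2*n}" using assms by (simp add: permutes_swap_id)
  have "(\<Sum>\<sigma> | \<sigma> permutes {..<2*n}. ?term (\<lambda>i j. A (?t i) (?t j)) \<sigma>)
      = (\<Sum>\<sigma> | \<sigma> permutes {..<2*n}. ?term (\<lambda>i j. A (?t i) (?t j)) (?t \<circ> \<sigma>))"
    by (rule setum_permutations_compose_left[OF t])
  also have "\<dots> = (\<Sum>\<sigma> | \<sigma> permutes {..<2*n}. - ?term A \<sigma>)"
  proof (rule sum.cong[OF refl])
    fix \<sigma> assume "\<sigma> \<in> {\<sigma>. \<sigma> permutes {..<2*n}}"
    then have "permutation \<sigma>" by (auto simp: permutation_permutes)
    then have "sign (?t \<circ> \<sigma>) = - sign \<sigma>"
      using assms by (simp add: sign_compose permutation_swap_id sign_swap_id)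
    then show "?term (\<lambda>i j. A (?t i) (?t j)) (?t \<circ> \<sigma>) = - ?term A \<sigma>" by simp
  qed
  finally show ?thesis by (simp add: pfaffian_def sum_negf)
qed

lemma pfaffian_eq_0_if_equal_rows:
  assumes "a < 2*n" "b < 2*n" "a \<noteq> b"
    and "\<And>j. A a j = A b j" "\<And>i. A i a = A i b"
  shows "pfaffian n A = 0"
proof -
  have "A (Transposition.transpose a b i) (Transposition.transpose a b j) = A i j" for i j
    unfolding Transposition.transpose_def using assms(4,5) by presburger
  then show ?thesis using pfaffian_swap[OF assms(1-3), of A] by (simp add: fun_eq_iff)
qed

lemma permutes_pair_containing:
  assumes \<sigma>: "\<sigma> permutes {..<2*n}" and a: "a < 2*(n::nat)"
  obtains i where "i < n" "\<sigma> (2*i) = a \<or> \<sigma> (2*i+1) = a"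
proof -
  obtain j where j: "\<sigma> j = a" using \<sigma> unfolding permutes_def by metis
  have "j < 2*n" using j a permutes_in_image[OF \<sigma>, of j] by simp
  moreover have "j = 2 * (j div 2) \<or> j = 2 * (j div 2) + 1" by presburger
  ultimately show thesis using that[of "j div 2"] j by auto
qed

lemma linear_form_pairing_product:
  assumes B1: "\<And>x. linear_form (B x)" and B2: "\<And>y. linear_form (\<lambda>x. B x y)"
    and \<sigma>: "\<sigma> permutes {..<2*n}" and a: "a < 2*(n::nat)"
  shows "linear_form (\<lambda>z. \<Prod>i<n. B ((\<phi>(a:=z)) (\<sigma> (2*i))) ((\<phi>(a:=z)) (\<sigma> (2*i+1))))"
proof -
  obtain i0 where i0: "i0 < n" "\<sigma> (2*i0) = a \<or> \<sigma> (2*i0+1) = a"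
    using permutes_pair_containing[OF \<sigma> a] .
  have inj: "inj \<sigma>" using permutes_inj[OF \<sigma>] .
  have other: "\<sigma> (2*i) \<noteq> a \<and> \<sigma> (2*i+1) \<noteq> a" if "i \<noteq> i0" for i
  proof -
    have "2*i \<noteq> 2*i0" "2*i \<noteq> 2*i0+1" "2*i+1 \<noteq> 2*i0" "2*i+1 \<noteq> 2*i0+1"
      using that by presburger+
    then show ?thesis using i0(2) injD[OF inj] by metis
  qed
  define K where "K = (\<Prod>i\<in>{..<n}-{i0}. B (\<phi> (\<sigma> (2*i))) (\<phi> (\<sigma> (2*i+1))))"
  have split: "(\<Prod>i<n. B ((\<phi>(a:=z)) (\<sigma> (2*i))) ((\<phi>(a:=z)) (\<sigma> (2*i+1)))) =
      K * B ((\<phi>(a:=z)) (\<sigma> (2*i0))) ((\<phi>(a:=z)) (\<sigma> (2*i0+1)))" for z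
  proof -
    have "(\<Prod>i\<in>{..<n}-{i0}. B ((\<phi>(a:=z)) (\<sigma> (2*i))) ((\<phi>(a:=z)) (\<sigma> (2*i+1)))) = K"
      unfolding K_def by (rule prod.cong) (use other in auto)
    then show ?thesis using i0(1) by (subst prod.remove[of _ i0]) (auto simp: mult.commute)
  qed
  have "\<sigma> (2*i0) \<noteq> \<sigma> (2*i0+1)" using injD[OF inj] by (metis n_not_Suc_n add.commute plus_1_eq_Suc)
  then have "linear_form (\<lambda>z. B ((\<phi>(a:=z)) (\<sigma> (2*i0))) ((\<phi>(a:=z)) (\<sigma> (2*i0+1))))"
    using i0(2) B1 B2 by auto
  then show ?thesis unfolding split by (rule linear_form_cmult)
qed

lemma linear_form_pfaffian_gram:
  assumes B1: "\<And>x. linear_form (B x)" and B2: "\<And>y. linear_form (\<lambda>x. B x y)"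
    and a: "a < 2*n"
  shows "linear_form (\<lambda>z. pfaffian n (\<lambda>i j. B ((\<phi>(a:=z)) i) ((\<phi>(a:=z)) j)))"
proof -
  have "linear_form (\<lambda>z. of_int (sign \<sigma>) / (2 ^ n * fact n) *
      (\<Prod>i<n. B ((\<phi>(a:=z)) (\<sigma> (2*i))) ((\<phi>(a:=z)) (\<sigma> (2*i+1)))))"
    if "\<sigma> \<in> {\<sigma>. \<sigma> permutes {..<2*n}}" for \<sigma>
    using that by (intro linear_form_cmult linear_form_pairing_product[OF B1 B2 _ a]) simp
  then show ?thesis
    unfolding pfaffian_def sum_divide_distrib by (intro linear_form_sum_forms) simp
qed

lemma pfaffian_eq_0_if_zero_row:
  assumes "a < 2*n" and "\<And>j. j < 2*n \<Longrightarrow> A a j = 0" and "\<And>i. i < 2*n \<Longrightarrow> A i a = 0"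
  shows "pfaffian n A = 0"
proof -
  have "(\<Prod>i<n. A (\<sigma> (2*i)) (\<sigma> (2*i+1))) = 0" if \<sigma>: "\<sigma> permutes {..<2*n}" for \<sigma>
  proof -
    obtain i0 where i0: "i0 < n" "\<sigma> (2*i0) = a \<or> \<sigma> (2*i0+1) = a"
      using permutes_pair_containing[OF \<sigma> assms(1)] .
    then have "\<sigma> (2*i0) < 2*n" "\<sigma> (2*i0+1) < 2*n"
      using permutes_in_image[OF \<sigma>] by auto
    then have "A (\<sigma> (2*i0)) (\<sigma> (2*i0+1)) = 0" using i0(2) assms(2,3) by auto
    then show ?thesis using i0(1) by (intro prod_zero) auto
  qed
  then show ?thesis unfolding pfaffian_def by (simp add: sum.neutral)
qed

lemma summable_on_sum:
  fixes F :: "'i \<Rightarrow> 'a \<Rightarrow> 'b::topological_comm_monoid_add"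
  assumes "\<And>i. i \<in> I \<Longrightarrow> F i summable_on A"
  shows "(\<lambda>x. \<Sum>i\<in>I. F i x) summable_on A"
  using assms by (induction I rule: infinite_finite_induct) (simp_all add: summable_on_add)

lemma infsum_diff:
  fixes F G :: "'a \<Rightarrow> 'b::{topological_ab_group_add, t2_space}"
  assumes "F summable_on A" "G summable_on A"
  shows "(\<Sum>\<^sub>\<infinity>x\<in>A. F x - G x) = infsum F A - infsum G A"
  using infsum_add[OF assms(1) summable_on_uminus[THEN iffD2, OF assms(2)]] infsum_uminus[of G A]
  by simp

lemma bij_betw_int_succ: "bij_betw (\<lambda>x::int. x + 1) UNIV UNIV"
  by (rule bij_betwI[where g = "\<lambda>x. x - 1"]) auto

lemma monic_family_span:
  fixes p :: "nat \<Rightarrow> 'a::comm_ring_1 poly"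
  assumes "\<And>n. degree (p n) = n" "\<And>n. lead_coeff (p n) = 1" "degree r \<le> N"
  shows "\<exists>a. r = (\<Sum>k\<le>N. smult (a k) (p k))"
  using assms(3)
proof (induction N arbitrary: r)
  case 0
  have "p 0 = 1"
    using assms(1,2)[of 0] by (metis degree_0_id one_pCons)
  moreover have "r = [:coeff r 0:]" using 0 by (metis degree_0_id le_0_eq)
  ultimately have "r = smult (coeff r 0) (p 0)" by simp
  then show ?case by (intro exI[of _ "\<lambda>_. coeff r 0"]) simp
next
  case (Suc N)
  define r' where "r' = r - smult (coeff r (Suc N)) (p (Suc N))"
  have "degree r' \<le> N"
  proof (rule degree_le, intro allI impI)
    fix i assume "N < i"
    then consider "i = Suc N" | "Suc N < i" by linarith
    then show "coeff r' i = 0"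
    proof cases
      case 2
      then have "coeff r i = 0" "coeff (p (Suc N)) i = 0"
        using Suc.prems assms(1) by (auto intro: coeff_eq_0)
      then show ?thesis unfolding r'_def by simp
    qed (use assms(1,2) in \<open>simp add: r'_def\<close>)
  qed
  then obtain a where a: "r' = (\<Sum>k\<le>N. smult (a k) (p k))" using Suc.IH by blast
  have "r = (\<Sum>k\<le>Suc N. smult ((a(Suc N := coeff r (Suc N))) k) (p k))"
    using a by (simp add: r'_def algebra_simps)
  then show ?case by blast
qed

locale moment_weight =
  fixes \<rho> :: "int \<Rightarrow> real"
  assumes nonneg: "\<And>x. \<rho> x \<ge> 0"
    and moments: "\<And>k::nat. (\<lambda>x::int. \<bar>real_of_int x\<bar> ^ k * \<rho> x) summable_on UNIV"
begin

definition wsum :: "real poly \<Rightarrow> real" where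
  "wsum r = (\<Sum>\<^sub>\<infinity>x\<in>(UNIV::int set). poly r (of_int x) * \<rho> x)"

lemma summable_power_weight: "(\<lambda>x::int. real_of_int x ^ k * \<rho> x) summable_on UNIV"
proof -
  have "(\<lambda>x::int. norm (real_of_int x ^ k * \<rho> x)) = (\<lambda>x::int. \<bar>real_of_int x\<bar> ^ k * \<rho> x)"
    using nonneg by (auto simp: abs_mult power_abs)
  then have "Infinite_Sum.abs_summable_on (\<lambda>x::int. real_of_int x ^ k * \<rho> x) UNIV"
    using moments[of k] by simp
  then show ?thesis by (rule abs_summable_summable)
qed

lemma summable_poly_weight: "(\<lambda>x::int. poly r (of_int x) * \<rho> x) summable_on UNIV"
proof -
  have "(\<lambda>x::int. poly r (of_int x) * \<rho> x) =
        (\<lambda>x. \<Sum>i\<le>degree r. coeff r i * (real_of_int x ^ i * \<rho> x))"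
    by (auto simp: poly_altdef sum_distrib_right mult.assoc)
  then show ?thesis
    by (simp add: summable_on_sum summable_on_cmult_right summable_power_weight)
qed

lemma wsum_add: "wsum (q + r) = wsum q + wsum r"
  unfolding wsum_def by (simp add: distrib_right infsum_add summable_poly_weight)

lemma wsum_smult: "wsum (smult c r) = c * wsum r"
  unfolding wsum_def by (simp add: mult.assoc infsum_cmult_right')

lemma wsum_diff: "wsum (q - r) = wsum q - wsum r"
  using wsum_add[of q "-r"] wsum_smult[of "-1" r] by simp

lemma linear_form_wsum_mult: "linear_form (\<lambda>r. wsum (q * r))"
  unfolding linear_form_def by (simp add: distrib_left wsum_add wsum_smult)

end


locale orthogonal_polys = moment_weight +
  fixes p :: "nat \<Rightarrow> real poly" and h :: "nat \<Rightarrow> real"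
  assumes degree_p [simp]: "\<And>n. degree (p n) = n"
    and lead_coeff_p [simp]: "\<And>n. lead_coeff (p n) = 1"
    and orth: "\<And>m n. wsum (p m * p n) = (if n = m then h n else 0)"
    and h_pos: "\<And>n. h n > 0"
begin

lemma wsum_orth_lower_degree:
  assumes "degree r < n"
  shows "wsum (p n * r) = 0"
proof -
  have "degree r \<le> n - 1" using assms by simp
  then obtain a where a: "r = (\<Sum>k\<le>n-1. smult (a k) (p k))"
    using monic_family_span[OF degree_p lead_coeff_p] by blast
  have "wsum (p n * r) = (\<Sum>k\<le>n-1. a k * wsum (p n * p k))"
    unfolding a by (rule linear_form_sum[OF linear_form_wsum_mult])
  also have "\<dots> = 0" using assms orth by (intro sum.neutral) auto
  finally show ?thesis .
qed

lemma orthogonal_expansion: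
  assumes "degree r \<le> N"
  shows "r = (\<Sum>k\<le>N. smult (wsum (p k * r) / h k) (p k))"
proof -
  obtain a where a: "r = (\<Sum>k\<le>N. smult (a k) (p k))"
    using monic_family_span[OF degree_p lead_coeff_p assms] by blast
  have "wsum (p j * r) / h j = a j" if "j \<le> N" for j
  proof -
    have "wsum (p j * r) = (\<Sum>k\<le>N. a k * wsum (p j * p k))"
      by (subst a, rule linear_form_sum[OF linear_form_wsum_mult])
    also have "\<dots> = (\<Sum>k\<le>N. if k = j then a k * h k else 0)"
      using orth by (intro sum.cong) auto
    also have "\<dots> = a j * h j" using that by simp
    finally show ?thesis using h_pos[of j] by simp
  qed
  then have "(\<Sum>k\<le>N. smult (wsum (p k * r) / h k) (p k)) = (\<Sum>k\<le>N. smult (a k) (p k))"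
    by (intro sum.cong) auto
  with a show ?thesis by simp
qed

end


locale pearson_pair = moment_weight +
  fixes f g :: "real poly"
  assumes degree_f: "degree f \<le> 2" and degree_g: "degree g \<le> 1"
    and pearson: "\<And>x::int. poly f (of_int (x + 1)) * \<rho> (x + 1) - poly f (of_int x) * \<rho> x
                          = poly g (of_int x) * \<rho> x"
begin

definition skew_form :: "real poly \<Rightarrow> real poly \<Rightarrow> real" where
  "skew_form \<phi> \<psi> = wsum (\<phi> * Al_poly f g \<psi>)"

lemma degree_Al_poly_le: "degree (Al_poly f g q) \<le> degree q + 1"
  using degree_Al_poly[OF degree_f degree_g] .

lemma skew_form_by_parts:
  "skew_form \<phi> \<psi> = wsum (f * (shift_poly (-1) \<phi> * \<psi> - \<phi> * shift_poly (-1) \<psi>))"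
proof -
  define G where "G x = poly (f * (shift_poly (-1) \<phi> * \<psi>)) (of_int x) * \<rho> x" for x
  define H where "H x = poly (f * (\<phi> * shift_poly (-1) \<psi>)) (of_int x) * \<rho> x" for x
  have "poly (\<phi> * Al_poly f g \<psi>) (of_int x) * \<rho> x
      = poly \<phi> (of_int x) * poly \<psi> (of_int x + 1) * (poly g (of_int x) * \<rho> x)
        + poly f (of_int x) * \<rho> x * poly \<phi> (of_int x) * (poly \<psi> (of_int x + 1) - poly \<psi> (of_int x - 1))"
    for x by (simp add: Al_poly_def algebra_simps)
  also have "\<dots> x = G (x + 1) - H x" for x
    unfolding G_def H_def pearson[symmetric] by (simp add: algebra_simps)
  finally have "skew_form \<phi> \<psi> = (\<Sum>\<^sub>\<infinity>x\<in>UNIV. G (x + 1) - H x)"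
    unfolding skew_form_def wsum_def by simp
  also have "\<dots> = infsum G UNIV - infsum H UNIV"
  proof -
    have "G summable_on UNIV" "H summable_on UNIV"
      unfolding G_def H_def by (rule summable_poly_weight)+
    then show ?thesis
      using infsum_reindex_bij_betw[OF bij_betw_int_succ, of G]
        summable_on_reindex_bij_betw[OF bij_betw_int_succ, of G]
      by (subst infsum_diff) simp_all
  qed
  also have "\<dots> = wsum (f * (shift_poly (-1) \<phi> * \<psi> - \<phi> * shift_poly (-1) \<psi>))"
    unfolding right_diff_distrib wsum_diff unfolding wsum_def G_def[abs_def] H_def[abs_def] ..
  finally show ?thesis .
qed

lemma skew_form_antisym: "skew_form \<phi> \<psi> = - skew_form \<psi> \<phi>"
proof -
  have "f * (shift_poly (-1) \<phi> * \<psi> - \<phi> * shift_poly (-1) \<psi>)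
      = - (f * (shift_poly (-1) \<psi> * \<phi> - \<psi> * shift_poly (-1) \<phi>))"
    by (simp add: algebra_simps)
  then show ?thesis
    using wsum_smult[of "-1"] by (simp add: skew_form_by_parts)
qed

lemma skew_form_self [simp]: "skew_form \<phi> \<phi> = 0"
  using skew_form_antisym[of \<phi> \<phi>] by simp

lemma linear_form_skew_form_right: "linear_form (skew_form \<phi>)"
  unfolding linear_form_def skew_form_def
  by (simp add: Al_poly_add Al_poly_smult distrib_left wsum_add wsum_smult)

lemma linear_form_skew_form_left: "linear_form (\<lambda>\<phi>. skew_form \<phi> \<psi>)"
  unfolding linear_form_def skew_form_def by (simp add: distrib_right wsum_add wsum_smult)

lemma skew_form_monom:
  "skew_form (monom 1 i) (monom 1 j) = (\<Sum>\<^sub>\<infinity>x\<in>(UNIV::int set).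
      (real_of_int x ^ i * (real_of_int x + 1) ^ j - (real_of_int x + 1) ^ i * real_of_int x ^ j)
      * (poly f (of_int (x + 1)) * \<rho> (x + 1)))"
proof -
  define F where "F x = poly (f * (shift_poly (-1) (monom 1 i) * monom 1 j
      - monom 1 i * shift_poly (-1) (monom 1 j))) (of_int x) * \<rho> x" for x
  have "skew_form (monom 1 i) (monom 1 j) = infsum (\<lambda>x. F (x + 1)) UNIV"
    unfolding skew_form_by_parts wsum_def F_def[symmetric]
    by (rule infsum_reindex_bij_betw[OF bij_betw_int_succ, symmetric])
  then show ?thesis
    by (simp add: F_def poly_monom algebra_simps)
qed

end


locale pearson_orthogonal_polys = orthogonal_polys + pearson_pair
begin

lemma coeff_p_self [simp]: "coeff (p n) n = 1"
  using lead_coeff_p[of n] by simp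

definition c_coeff :: "nat \<Rightarrow> real" where
  "c_coeff n = - skew_form (p (Suc n)) (p n)"

lemma skew_form_p_distant:
  assumes "k + 1 < n"
  shows "skew_form (p k) (p n) = 0"
proof -
  have "degree (Al_poly f g (p k)) < n" using degree_Al_poly_le[of "p k"] assms by simp
  then have "skew_form (p n) (p k) = 0" unfolding skew_form_def by (rule wsum_orth_lower_degree)
  then show ?thesis using skew_form_antisym[of "p k"] by simp
qed

lemma Al_poly_p_three_term:
  "Al_poly f g (p n) = smult (- c_coeff n / h (Suc n)) (p (Suc n))
     + (if n = 0 then 0 else smult (c_coeff (n - 1) / h (n - 1)) (p (n - 1)))"
proof -
  define F where "F k = smult (skew_form (p k) (p n) / h k) (p k)" for k
  have "degree (Al_poly f g (p n)) \<le> Suc n" using degree_Al_poly_le[of "p n"] by simp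
  then have expansion: "Al_poly f g (p n) = (\<Sum>k\<le>Suc n. F k)"
    unfolding F_def skew_form_def by (rule orthogonal_expansion)
  show ?thesis
  proof (cases n)
    case 0
    then show ?thesis using expansion by (simp add: F_def c_coeff_def)
  next
    case (Suc n')
    have "(\<Sum>k<n'. F k) = 0"
      unfolding F_def using Suc by (intro sum.neutral) (auto simp: skew_form_p_distant)
    then have "(\<Sum>k\<le>Suc n. F k) = F (Suc n) + F n'"
      using Suc by (simp add: lessThan_Suc_atMost[symmetric] F_def)
    then show ?thesis
      using expansion Suc skew_form_antisym[of "p n" "p n'"] by (simp add: F_def c_coeff_def)
  qed
qed

lemma skew_form_p_Suc_lower_degree:
  assumes "skew_form (p (Suc n)) (p n) = 0" and "degree q \<le> n"
  shows "skew_form (p (Suc n)) q = 0"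
proof -
  define r where "r = q - smult (coeff q n) (p n)"
  have "degree r \<le> n"
    unfolding r_def using assms(2) degree_smult_le[of "coeff q n" "p n"]
    by (intro degree_diff_le) simp_all
  moreover have "coeff r n = 0" unfolding r_def by simp
  ultimately have "degree (Al_poly f g r) < Suc n"
    using degree_Al_poly_le[of r] by (cases "r = 0") (auto simp: le_less)
  then have "skew_form (p (Suc n)) r = 0" unfolding skew_form_def by (rule wsum_orth_lower_degree)
  moreover have "q = smult (coeff q n) (p n) + r" unfolding r_def by simp
  ultimately show ?thesis
    using assms(1) linear_form_skew_form_right[of "p (Suc n)"]
    unfolding linear_form_def by (metis mult_zero_right add_0)
qed

text \<open>By multilinearity and alternation, the monomial \<open>x\<^sup>2\<^sup>m\<^sup>+\<^sup>1\<close> may be replaced by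
  \<open>p\<^sub>2\<^sub>m\<^sub>+\<^sub>1\<close>, whose row then vanishes.\<close>
lemma pfaffian_skew_moments_eq_0:
  assumes "c_coeff (2*m) = 0"
  shows "pfaffian (Suc m) (\<lambda>i j. skew_form (monom 1 i) (monom 1 j)) = 0"
proof -
  define N where "N = 2*m+1"
  define \<phi> where "\<phi> k = (monom 1 k :: real poly)" for k
  define l where "l z = pfaffian (Suc m) (\<lambda>i j. skew_form ((\<phi>(N:=z)) i) ((\<phi>(N:=z)) j))" for z
  have N: "N < 2 * Suc m" unfolding N_def by simp
  have l: "linear_form l"
    unfolding l_def
    by (rule linear_form_pfaffian_gram[OF linear_form_skew_form_right linear_form_skew_form_left N])
  have "degree (\<phi> k) \<le> 2*m" if "k < 2 * Suc m" "k \<noteq> N" for k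
    using that unfolding \<phi>_def N_def by (simp add: degree_monom_eq)
  then have row: "skew_form (p N) ((\<phi>(N := p N)) k) = 0" if "k < 2 * Suc m" for k
    using that assms skew_form_p_Suc_lower_degree[of "2*m"]
    by (cases "k = N") (auto simp: N_def c_coeff_def)
  have "l (p N) = 0"
    unfolding l_def
  proof (rule pfaffian_eq_0_if_zero_row[OF N])
    fix k assume "k < 2 * Suc m"
    then show "skew_form ((\<phi>(N := p N)) N) ((\<phi>(N := p N)) k) = 0"
      and "skew_form ((\<phi>(N := p N)) k) ((\<phi>(N := p N)) N) = 0"
      using row[of k] skew_form_antisym[of "(\<phi>(N := p N)) k" "p N"] by simp_all
  qed
  have "l (monom 1 k) = 0" if "k < N" for k
    unfolding l_def using that N
    by (intro pfaffian_eq_0_if_equal_rows[of k _ N]) (auto simp: \<phi>_def)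
  define r where "r = monom 1 N - p N"
  have "degree r \<le> N" unfolding r_def by (rule degree_diff_le) (simp_all add: degree_monom_le)
  moreover have "coeff r N = 0" unfolding r_def by simp
  ultimately have r_monoms: "r = (\<Sum>k<N. smult (coeff r k) (monom 1 k))"
    using poly_as_sum_of_monoms'[of r N] by (simp add: smult_monom lessThan_Suc_atMost[symmetric])
  have "l (\<Sum>k<N. smult (coeff r k) (monom 1 k)) = 0"
    unfolding linear_form_sum[OF l] using \<open>\<And>k. k < N \<Longrightarrow> l (monom 1 k) = 0\<close> by simp
  then have "l r = 0" using r_monoms by metis
  have "pfaffian (Suc m) (\<lambda>i j. skew_form (monom 1 i) (monom 1 j)) = l (p N + r)"
    unfolding l_def r_def \<phi>_def by simp
  also have "\<dots> = 0" using l \<open>l (p N) = 0\<close> \<open>l r = 0\<close> unfolding linear_form_def by simp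
  finally show ?thesis .
qed

end


lemma smult_sum_right: "smult a (sum F S) = (\<Sum>x\<in>S. smult a (F x))"
  by (induction S rule: infinite_finite_induct) (simp_all add: smult_add_right)

lemma even_combination_Suc:
  fixes p Q :: "nat \<Rightarrow> 'a::field poly"
  assumes Q_even: "\<And>n. Q (2*n) = (\<Sum>l\<le>n. smult (\<Prod>j\<in>{l..<n}. c (2*j+1) / c (2*j)) (p (2*l)))"
  shows "Q (2 * Suc m) = p (2 * Suc m) + smult (c (2*m+1) / c (2*m)) (Q (2*m))"
proof -
  define r where "r j = c (2*j+1) / c (2*j)" for j
  have "Q (2 * Suc m) = (\<Sum>l\<le>m. smult (\<Prod>j\<in>{l..<Suc m}. r j) (p (2*l))) + p (2 * Suc m)"
    unfolding Q_even r_def by simp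
  also have "(\<Sum>l\<le>m. smult (\<Prod>j\<in>{l..<Suc m}. r j) (p (2*l)))
      = smult (r m) (\<Sum>l\<le>m. smult (\<Prod>j\<in>{l..<m}. r j) (p (2*l)))"
    unfolding smult_sum_right by (intro sum.cong refl) (simp add: prod.atLeastLessThan_Suc mult.commute)
  finally show ?thesis unfolding Q_even r_def by simp
qed

lemma Al_poly_even_combination:
  assumes three_term: "\<And>n. Al_poly f g (p n) = smult (- c n / h (Suc n)) (p (Suc n))
        + (if n = 0 then 0 else smult (c (n - 1) / h (n - 1)) (p (n - 1)))"
    and c_even: "\<And>j. c (2*j) \<noteq> 0"
    and Q_even: "\<And>n. Q (2*n) = (\<Sum>l\<le>n. smult (\<Prod>j\<in>{l..<n}. c (2*j+1) / c (2*j)) (p (2*l)))"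
  shows "Al_poly f g (Q (2*m)) = smult (- c (2*m) / h (2*m+1)) (p (2*m+1))"
proof (induction m)
  case 0
  then show ?case using three_term[of 0] Q_even[of 0] by simp
next
  case (Suc m)
  have "Al_poly f g (Q (2 * Suc m))
      = Al_poly f g (p (2 * Suc m)) + smult (c (2*m+1) / c (2*m)) (Al_poly f g (Q (2*m)))"
    unfolding even_combination_Suc[OF Q_even] by (simp only: Al_poly_add Al_poly_smult)
  also have "\<dots> = smult (- c (2 * Suc m) / h (2 * Suc m + 1)) (p (2 * Suc m + 1))
      + smult (c (2*m+1) / h (2*m+1)) (p (2*m+1))
      + smult (c (2*m+1) / c (2*m)) (smult (- c (2*m) / h (2*m+1)) (p (2*m+1)))"
    unfolding Suc.IH three_term[of "2 * Suc m"] by (simp add: numeral_2_eq_2)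
  also have "smult (c (2*m+1) / c (2*m)) (smult (- c (2*m) / h (2*m+1)) (p (2*m+1)))
      = - smult (c (2*m+1) / h (2*m+1)) (p (2*m+1))"
    using c_even[of m] by simp
  finally show ?case by simp
qed

theorem proposition3p11:
  fixes \<rho> :: "int \<Rightarrow> real" and f g :: "real poly"
    and p :: "nat \<Rightarrow> real poly" and h :: "nat \<Rightarrow> real"
    and c u t :: "nat \<Rightarrow> real" and Q :: "nat \<Rightarrow> real poly" and \<omega> :: "int \<Rightarrow> real"
  assumes nonneg: "\<forall>x. \<rho> x \<ge> 0"
    and moments: "\<forall>k::nat. (\<lambda>x::int. \<bar>real_of_int x\<bar> ^ k * \<rho> x) summable_on UNIV"
    and deg_f: "degree f \<le> 2" and deg_g: "degree g \<le> 1"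
    and pearson: "\<forall>x::int. poly f (of_int (x + 1)) * \<rho> (x + 1) - poly f (of_int x) * \<rho> x
                          = poly g (of_int x) * \<rho> x"
    and bdry_low: "\<forall>a::int. \<rho> a > 0 \<and> (\<forall>x. \<rho> x > 0 \<longrightarrow> a \<le> x)
                      \<longrightarrow> poly f (of_int a) * \<rho> a = 0"
    and bdry_top: "((\<lambda>x::int. poly f (of_int x) * \<rho> x) \<longlongrightarrow> 0) at_top"
    and bdry_bot: "((\<lambda>x::int. poly f (of_int x) * \<rho> x) \<longlongrightarrow> 0) at_bot"
    and monic: "\<forall>n. degree (p n) = n \<and> lead_coeff (p n) = 1"
    and orth: "\<forall>m n. (\<Sum>\<^sub>\<infinity>x\<in>(UNIV::int set). poly (p m) (of_int x) * poly (p n) (of_int x) * \<rho> x)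
                    = (if n = m then h n else 0)"
    and h_pos: "\<forall>n. h n > 0"
    and c_def: "\<forall>n. c n = - (\<Sum>\<^sub>\<infinity>x\<in>(UNIV::int set).
                    poly (p (Suc n)) (of_int x) * Al f g (poly (p n)) (of_int x) * \<rho> x)"
    and \<omega>_def: "\<forall>x. \<omega> x = poly f (of_int (x + 1)) * \<rho> (x + 1)"
    and pfaff: "\<forall>n\<ge>1. pfaffian n (\<lambda>i j. (\<Sum>\<^sub>\<infinity>x\<in>(UNIV::int set).
                    (real_of_int x ^ i * (real_of_int x + 1) ^ j
                     - (real_of_int x + 1) ^ i * real_of_int x ^ j) * \<omega> x)) \<noteq> 0"
    and Q_odd: "\<forall>n. Q (2*n+1) = p (2*n+1)"
    and Q_even: "\<forall>n. Q (2*n) = (\<Sum>l\<le>n. smult (\<Prod>j\<in>{l..<n}. c (2*j+1) / c (2*j)) (p (2*l)))"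
    and u_def: "\<forall>n. u n = c (2*n)"
    and t_def: "\<forall>m\<ge>1. t m = - c (2*m - 1) / c (2*m - 2)"
  shows "\<forall>m.
      p (2*m+1) = Q (2*m+1)
    \<and> (\<forall>y. (1 / u m) * Al f g (poly (Q (2*m+1))) y
            = poly (p (2*m)) y / h (2*m) + t (m+1) * (poly (p (2*m+2)) y / h (2*m+2)))
    \<and> p (2*m) = (if m = 0 then Q 0 else Q (2*m) + smult (t m) (Q (2*m - 2)))
    \<and> (\<forall>y. (1 / u m) * Al f g (poly (Q (2*m))) y = - (poly (p (2*m+1)) y / h (2*m+1)))"
proof -
  interpret moment_weight \<rho> using nonneg moments by unfold_locales auto
  have "wsum (p m * p n) = (if n = m then h n else 0)" for m n
    using orth by (simp add: wsum_def mult.assoc)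
  then interpret pearson_orthogonal_polys \<rho> p h f g
    using nonneg moments deg_f deg_g pearson h_pos monic by unfold_locales (simp_all, metis)
  have c: "c = c_coeff"
    using c_def by (simp add: fun_eq_iff c_coeff_def skew_form_def wsum_def Al_poly_eval mult.assoc)
  have c_even: "c_coeff (2*m) \<noteq> 0" for m
    using pfaff[rule_format, of "Suc m"] pfaffian_skew_moments_eq_0[of m]
    by (auto simp: skew_form_monom \<omega>_def)
  note Q_even' = Q_even[rule_format, unfolded c]
  show ?thesis
  proof (intro allI conjI)
    fix m y
    show "p (2*m+1) = Q (2*m+1)" using Q_odd by simp
    have "Al f g (poly (Q (2*m+1))) y = c_coeff (2*m) / h (2*m) * poly (p (2*m)) y
        - c_coeff (2*m+1) / h (2*m+2) * poly (p (2*m+2)) y"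
      using Al_poly_p_three_term[of "2*m+1"] Q_odd by (simp add: Al_poly_eval)
    then show "(1 / u m) * Al f g (poly (Q (2*m+1))) y
        = poly (p (2*m)) y / h (2*m) + t (m+1) * (poly (p (2*m+2)) y / h (2*m+2))"
      using u_def t_def c_even[of m] by (simp add: c field_simps)
    show "p (2*m) = (if m = 0 then Q 0 else Q (2*m) + smult (t m) (Q (2*m - 2)))"
      using Q_even'[of 0] even_combination_Suc[OF Q_even', of "m - 1"] t_def
      by (cases m) (simp_all add: c)
    show "(1 / u m) * Al f g (poly (Q (2*m))) y = - (poly (p (2*m+1)) y / h (2*m+1))"
      using Al_poly_even_combination[OF Al_poly_p_three_term c_even Q_even', of m] u_def c_even[of m]
      by (simp add: c Al_poly_eval)
  qed
qed

end
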